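(* Let $E$ be a Stone space with at least five points. Then the graph $\mathscr{C}(E)$ is connected. Moreover, if $E$ is finite then $\mathscr{C}(E)$ has diameter at most four, while if $E$ is infinite then $\mathscr{C}(E)$ has diameter exactly two.
   Context: A Stone space is a compact, Hausdorff, totally disconnected topological space. A cut of $E$ is an unordered partition of $E$ into two disjoint clopen sets $U,V$, written $U\sqcup V$. A cut is non-peripheral if each of $U$ and $V$ contains at least two points. Two cuts $U\sqcup V$ and $U'\sqcup V'$ cross if all four sets $U\cap U'$, $U\cap V'$, $V\cap U'$, $V\cap V'$ are nonempty; otherwise they are compatible. The complex of cuts $\mathscr{C}(E)$ is the simplicial graph whose vertices are the non-peripheral cuts of $E$, with an edge between two distinct cuts whenever they are compatible. *)

theory Defs
  imports "HOL-Analysis.Analysis" "HOL-Library.Extended_Nat"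
begin

definition totally_disconnected_space :: "'a topology \<Rightarrow> bool" where
  "totally_disconnected_space X \<longleftrightarrow>
     (\<forall>S. S \<subseteq> topspace X \<and> connectedin X S \<longrightarrow> (\<forall>a\<in>S. \<forall>b\<in>S. a = b))"

definition stone_space :: "'a topology \<Rightarrow> bool" where
  "stone_space X \<longleftrightarrow> compact_space X \<and> Hausdorff_space X \<and> totally_disconnected_space X"

definition is_cut :: "'a topology \<Rightarrow> 'a set set \<Rightarrow> bool" where
  "is_cut X c \<longleftrightarrow> (\<exists>U V. c = {U, V} \<and> U \<inter> V = {} \<and> U \<union> V = topspace X \<and>
       openin X U \<and> closedin X U \<and> openin X V \<and> closedin X V)"

definition nonperipheral_cut :: "'a topology \<Rightarrow> 'a set set \<Rightarrow> bool" where
  "nonperipheral_cut X c \<longleftrightarrow> (\<exists>U V. c = {U, V} \<and> U \<inter> V = {} \<and> U \<union> V = topspace X \<and>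
       openin X U \<and> closedin X U \<and> openin X V \<and> closedin X V \<and>
       (\<exists>x y. x \<in> U \<and> y \<in> U \<and> x \<noteq> y) \<and> (\<exists>x y. x \<in> V \<and> y \<in> V \<and> x \<noteq> y))"

definition cut_vertices :: "'a topology \<Rightarrow> 'a set set set" where
  "cut_vertices X = {c. nonperipheral_cut X c}"

definition cuts_cross :: "'a set set \<Rightarrow> 'a set set \<Rightarrow> bool" where
  "cuts_cross c d \<longleftrightarrow> (\<forall>A\<in>c. \<forall>B\<in>d. A \<inter> B \<noteq> {})"

definition cuts_compatible :: "'a set set \<Rightarrow> 'a set set \<Rightarrow> bool" where
  "cuts_compatible c d \<longleftrightarrow> \<not> cuts_cross c d"

definition cut_adj :: "'a topology \<Rightarrow> 'a set set \<Rightarrow> 'a set set \<Rightarrow> bool" where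
  "cut_adj X c d \<longleftrightarrow> c \<in> cut_vertices X \<and> d \<in> cut_vertices X \<and> c \<noteq> d \<and> cuts_compatible c d"

definition cut_walk :: "'a topology \<Rightarrow> 'a set set \<Rightarrow> 'a set set \<Rightarrow> nat \<Rightarrow> bool" where
  "cut_walk X c d n \<longleftrightarrow> (\<exists>p :: nat \<Rightarrow> 'a set set. p 0 = c \<and> p n = d \<and>
       (\<forall>i\<le>n. p i \<in> cut_vertices X) \<and> (\<forall>i<n. cut_adj X (p i) (p (Suc i))))"

text \<open>Graph distance (infinity if no walk exists).\<close>
definition cut_dist :: "'a topology \<Rightarrow> 'a set set \<Rightarrow> 'a set set \<Rightarrow> enat" where
  "cut_dist X c d = (INF n \<in> {n. cut_walk X c d n}. enat n)"

definition cut_graph_connected :: "'a topology \<Rightarrow> bool" where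
  "cut_graph_connected X \<longleftrightarrow>
     (\<forall>c\<in>cut_vertices X. \<forall>d\<in>cut_vertices X. \<exists>n. cut_walk X c d n)"

definition cut_graph_diameter :: "'a topology \<Rightarrow> enat" where
  "cut_graph_diameter X = (SUP c \<in> cut_vertices X. SUP d \<in> cut_vertices X. cut_dist X c d)"

end

theory Submission
  imports Defs
begin

text \<open>
  Two crossing cuts \<open>{A, E - A}\<close> and \<open>{B, E - B}\<close> split \<open>E\<close> into four quadrants. If \<open>E\<close> has at
  least five points, some quadrant, say \<open>A \<inter> B\<close>, contains two points, and then
  \<open>{A \<inter> B, E - (A \<inter> B)}\<close> is a non-peripheral cut compatible with both. Hence any two vertices
  are at distance at most two, which gives connectedness and both upper bounds. In an infinite
  Stone space, clopen sets can cut out any two of four given points, which yields two crossing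
  non-peripheral cuts, so the diameter is then exactly two.
\<close>

lemma stone_space_separating_clopen:
  assumes "stone_space E" "x \<in> topspace E" "y \<in> topspace E" "x \<noteq> y"
  obtains T where "openin E T" "closedin E T" "x \<in> T" "y \<notin> T"
proof -
  have "\<not> connected_component_of E x y"
  proof
    assume "connected_component_of E x y"
    then obtain C where "connectedin E C" "x \<in> C" "y \<in> C"
      unfolding connected_component_of_def by blast
    then show False
      using assms(1,4) connectedin_subset_topspace
      unfolding stone_space_def totally_disconnected_space_def by blast
  qed
  moreover have "quasi_component_of E x = connected_component_of E x"
    using assms(1) by (simp add: stone_space_def quasi_eq_connected_component_of)
  ultimately have "\<not> quasi_component_of E x y" by simp
  then show thesis
    using that assms(2,3) unfolding quasi_component_of_def by blast
qed

lemma stone_space_clopen_trace: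
  assumes "stone_space E" "finite F" "F \<subseteq> topspace E" "G \<subseteq> F"
  obtains T where "openin E T" "closedin E T" "T \<inter> F = G"
proof -
  define S where "S g f = (SOME T. openin E T \<and> closedin E T \<and> g \<in> T \<and> f \<notin> T)" for g f
  have S: "openin E (S g f) \<and> closedin E (S g f) \<and> g \<in> S g f \<and> f \<notin> S g f"
    if gf: "g \<in> G" "f \<in> F - G" for g f
  proof -
    obtain T where "openin E T" "closedin E T" "g \<in> T" "f \<notin> T"
      by (rule stone_space_separating_clopen[OF assms(1), of g f]) (use gf assms(3,4) in auto)
    then show ?thesis unfolding S_def by (rule someI[where x = T, OF conjI[OF _ conjI[OF _ conjI]]])
  qed
  \<comment> \<open>\<open>topspace E\<close> is inserted so that the intersection stays closed when \<open>F - G = {}\<close>\<close>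
  define T where "T = (\<Union>g\<in>G. \<Inter>(insert (topspace E) (S g ` (F - G))))"
  have "finite G" using assms finite_subset by blast
  have "openin E (\<Inter>(insert (topspace E) (S g ` (F - G))))" if "g \<in> G" for g
  proof -
    have "\<Inter>(insert (topspace E) (S g ` (F - G))) = (\<Inter>f \<in> F - G. S g f) \<inter> topspace E"
      by auto
    moreover have "openin E ((\<Inter>f \<in> F - G. S g f) \<inter> topspace E)"
      using S that assms(2) by (intro openin_INT) auto
    ultimately show ?thesis by simp
  qed
  then have "openin E T" unfolding T_def by blast
  moreover have "closedin E (\<Inter>(insert (topspace E) (S g ` (F - G))))" if "g \<in> G" for g
    using S that by (intro closedin_Inter) auto
  then have "closedin E T" unfolding T_def using \<open>finite G\<close> by (intro closedin_Union) auto
  moreover have "T \<inter> F \<subseteq> G" unfolding T_def using S by blast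
  moreover have "G \<subseteq> T" unfolding T_def using S assms(3,4) by blast
  ultimately show thesis using that assms(4) by blast
qed

lemma two_points_in_some_quadrant:
  assumes "infinite S \<or> card S \<ge> 5"
  shows "\<exists>P\<in>{A, S - A}. \<exists>Q\<in>{B, S - B}. \<exists>x y. x \<in> P \<inter> Q \<and> y \<in> P \<inter> Q \<and> x \<noteq> y"
proof (rule ccontr)
  assume "\<not> ?thesis"
  then have small: "finite (P \<inter> Q) \<and> card (P \<inter> Q) \<le> 1"
    if "P \<in> {A, S - A}" "Q \<in> {B, S - B}" for P Q
    using that by (metis One_nat_def card_le_Suc0_iff_eq finite_subset insertI1 subsetI
        finite.emptyI finite_insert)
  define U where "U = (A \<inter> B) \<union> (A \<inter> (S - B)) \<union> ((S - A) \<inter> B) \<union> ((S - A) \<inter> (S - B))"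
  have "S \<subseteq> U" unfolding U_def by blast
  moreover have "finite U" unfolding U_def using small by simp
  moreover have "card U \<le> 4"
  proof -
    have "card U \<le> card (A \<inter> B) + card (A \<inter> (S - B)) + card ((S - A) \<inter> B) + card ((S - A) \<inter> (S - B))"
      unfolding U_def by (meson add_mono card_Un_le le_refl order_trans)
    moreover have "card (A \<inter> B) \<le> 1" "card (A \<inter> (S - B)) \<le> 1"
      "card ((S - A) \<inter> B) \<le> 1" "card ((S - A) \<inter> (S - B)) \<le> 1"
      using small by simp_all
    ultimately show ?thesis by linarith
  qed
  ultimately have "finite S" "card S \<le> 4"
    by (auto dest: finite_subset card_mono)
  then show False using assms by simp
qed

lemma nonperipheral_cut_clopen:
  assumes "openin E A" "closedin E A" "x \<in> A" "y \<in> A" "x \<noteq> y"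
    "u \<in> topspace E - A" "v \<in> topspace E - A" "u \<noteq> v"
  shows "nonperipheral_cut E {A, topspace E - A}"
  unfolding nonperipheral_cut_def
  using assms openin_subset[OF assms(1)] by (intro exI[of _ A] exI[of _ "topspace E - A"]) auto

lemma nonperipheral_cut_side:
  assumes "nonperipheral_cut E c" "A \<in> c"
  shows "c = {A, topspace E - A}" "openin E A" "closedin E A"
proof -
  obtain U V where "c = {U, V}" "U \<inter> V = {}" "U \<union> V = topspace E"
      "openin E U" "closedin E U" "openin E V" "closedin E V"
    using assms(1) unfolding nonperipheral_cut_def by blast
  then show "c = {A, topspace E - A}" "openin E A" "closedin E A"
    using assms(2) by auto
qed

lemma crossing_cuts_common_neighbour:
  assumes c: "nonperipheral_cut E c" and d: "nonperipheral_cut E d" and cross: "cuts_cross c d"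
    and A: "A \<in> c" and B: "B \<in> d" and xy: "x \<in> A \<inter> B" "y \<in> A \<inter> B" "x \<noteq> y"
  shows "\<exists>w. cut_adj E c w \<and> cut_adj E w d"
proof -
  let ?S = "topspace E" and ?W = "A \<inter> B"
  let ?w = "{?W, ?S - ?W}"
  have c_eq: "c = {A, ?S - A}" and d_eq: "d = {B, ?S - B}"
    using nonperipheral_cut_side(1) c d A B by blast+
  have "A \<inter> (?S - B) \<noteq> {}" "(?S - A) \<inter> B \<noteq> {}"
    using cross unfolding c_eq d_eq cuts_cross_def by simp_all
  then obtain u v where uv: "u \<in> A - B" "v \<in> B - A" "u \<in> ?S" "v \<in> ?S"
    by blast
  have "openin E ?W" "closedin E ?W"
    using nonperipheral_cut_side(2,3) c d A B by blast+
  then have "nonperipheral_cut E ?w"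
    by (rule nonperipheral_cut_clopen[where u = u and v = v]) (use xy uv in auto)
  moreover have "?W \<noteq> A" "?W \<noteq> ?S - A" "?W \<noteq> B" "?W \<noteq> ?S - B"
    using uv xy by blast+
  then have "?w \<noteq> c" "?w \<noteq> d"
    unfolding c_eq d_eq by (simp_all add: doubleton_eq_iff)
  moreover have "(?S - A) \<inter> ?W = {}" "?W \<inter> (?S - B) = {}" by blast+
  then have "cuts_compatible c ?w" "cuts_compatible ?w d"
    unfolding cuts_compatible_def cuts_cross_def c_eq d_eq by blast+
  ultimately show ?thesis
    using c d by (intro exI[of _ ?w]) (simp add: cut_adj_def cut_vertices_def)
qed

lemma cut_walk_refl: "c \<in> cut_vertices E \<Longrightarrow> cut_walk E c c 0"
  unfolding cut_walk_def by (intro exI[of _ "\<lambda>_. c"]) auto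

lemma cut_walk_edge: "cut_adj E c d \<Longrightarrow> cut_walk E c d 1"
  unfolding cut_walk_def
  by (intro exI[of _ "\<lambda>i. if i = 0 then c else d"]) (auto simp: cut_adj_def)

lemma cut_walk_two_edges: "cut_adj E c w \<Longrightarrow> cut_adj E w d \<Longrightarrow> cut_walk E c d 2"
  unfolding cut_walk_def
  by (intro exI[of _ "\<lambda>i. if i = 0 then c else if i = 1 then w else d"])
    (auto simp: numeral_2_eq_2 le_Suc_eq less_Suc_eq cut_adj_def)

lemma cut_walk_crossing_length_ge_two:
  assumes "cuts_cross c d" "cut_walk E c d n"
  shows "2 \<le> n"
proof (rule ccontr)
  assume "\<not> 2 \<le> n"
  then consider "n = 0" | "n = 1" by linarith
  then show False
  proof cases
    case 1
    then have "c = d" "nonperipheral_cut E c"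
      using assms(2) unfolding cut_walk_def cut_vertices_def by auto
    then obtain U V where "c = {U, V}" "U \<inter> V = {}" "cuts_cross c c"
      using assms(1) unfolding nonperipheral_cut_def by blast
    then show False unfolding cuts_cross_def by blast
  next
    case 2
    then have "cut_adj E c d" using assms(2) unfolding cut_walk_def by force
    then show False using assms(1) by (simp add: cut_adj_def cuts_compatible_def)
  qed
qed

lemma cut_dist_le_walk_length: "cut_walk E c d n \<Longrightarrow> cut_dist E c d \<le> enat n"
  unfolding cut_dist_def by (rule INF_lower) simp

lemma cut_dist_crossing_ge_two:
  assumes "cuts_cross c d"
  shows "2 \<le> cut_dist E c d"
  unfolding cut_dist_def
  using cut_walk_crossing_length_ge_two[OF assms]
  by (intro INF_greatest) (simp add: numeral_eq_enat)

lemma cut_walk_length_le_two: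
  assumes c: "c \<in> cut_vertices E" and d: "d \<in> cut_vertices E"
    and large: "infinite (topspace E) \<or> card (topspace E) \<ge> 5"
  shows "\<exists>n\<le>2. cut_walk E c d n"
proof -
  have c': "nonperipheral_cut E c" and d': "nonperipheral_cut E d"
    using c d by (simp_all add: cut_vertices_def)
  consider "c = d" | "c \<noteq> d" "cuts_compatible c d" | "cuts_cross c d"
    unfolding cuts_compatible_def by blast
  then show ?thesis
  proof cases
    case 1
    then show ?thesis using cut_walk_refl[OF c] by blast
  next
    case 2
    then show ?thesis using cut_walk_edge c d unfolding cut_adj_def by fastforce
  next
    case cross: 3
    obtain A B where "A \<in> c" "B \<in> d"
      using c' d' unfolding nonperipheral_cut_def by blast
    then have "c = {A, topspace E - A}" "d = {B, topspace E - B}"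
      using nonperipheral_cut_side(1) c' d' by blast+
    then obtain P Q x y where "P \<in> c" "Q \<in> d" "x \<in> P \<inter> Q" "y \<in> P \<inter> Q" "x \<noteq> y"
      using two_points_in_some_quadrant[OF large, of A B] by auto
    then obtain w where "cut_adj E c w" "cut_adj E w d"
      using crossing_cuts_common_neighbour[OF c' d' cross] by blast
    then show ?thesis using cut_walk_two_edges by blast
  qed
qed

lemma cut_graph_diameter_le_two:
  assumes "infinite (topspace E) \<or> card (topspace E) \<ge> 5"
  shows "cut_graph_diameter E \<le> 2"
  unfolding cut_graph_diameter_def
proof (intro SUP_least)
  fix c d assume "c \<in> cut_vertices E" "d \<in> cut_vertices E"
  then obtain n where "n \<le> 2" and walk: "cut_walk E c d n"
    using cut_walk_length_le_two[OF _ _ assms] by blast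
  from walk have "cut_dist E c d \<le> enat n" by (rule cut_dist_le_walk_length)
  also have "\<dots> \<le> 2" using \<open>n \<le> 2\<close> by (simp add: numeral_eq_enat)
  finally show "cut_dist E c d \<le> 2" .
qed

lemma crossing_nonperipheral_cuts_exist:
  assumes stone: "stone_space E" and inf: "infinite (topspace E)"
  obtains c d where "c \<in> cut_vertices E" "d \<in> cut_vertices E" "cuts_cross c d"
proof -
  let ?S = "topspace E"
  obtain F where "finite F" "card F = 3" "F \<subseteq> ?S"
    using infinite_arbitrarily_large[OF inf] by blast
  then obtain x1 x2 x3 where F: "F = {x1, x2, x3}" "x1 \<noteq> x2" "x2 \<noteq> x3" "x1 \<noteq> x3"
    by (auto simp: card_3_iff)
  obtain x4 where x4: "x4 \<in> ?S - F"
    using Diff_infinite_finite[OF \<open>finite F\<close> inf] infinite_imp_nonempty by blast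
  let ?F = "{x1, x2, x3, x4}"
  have in_S: "x1 \<in> ?S" "x2 \<in> ?S" "x3 \<in> ?S" "x4 \<in> ?S"
    and x4_new: "x4 \<noteq> x1" "x4 \<noteq> x2" "x4 \<noteq> x3"
    using \<open>F \<subseteq> ?S\<close> x4 F by auto
  then have "finite ?F" "?F \<subseteq> ?S" by auto
  obtain A where A: "openin E A" "closedin E A" "A \<inter> ?F = {x1, x2}"
    by (rule stone_space_clopen_trace[OF stone \<open>finite ?F\<close> \<open>?F \<subseteq> ?S\<close>, of "{x1, x2}"]) auto
  obtain B where B: "openin E B" "closedin E B" "B \<inter> ?F = {x1, x3}"
    by (rule stone_space_clopen_trace[OF stone \<open>finite ?F\<close> \<open>?F \<subseteq> ?S\<close>, of "{x1, x3}"]) auto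
  have "x \<in> A \<longleftrightarrow> x = x1 \<or> x = x2" "x \<in> B \<longleftrightarrow> x = x1 \<or> x = x3" if "x \<in> ?F" for x
    using A(3) B(3) that by blast+
  then have "x1 \<in> A" "x2 \<in> A" "x3 \<notin> A" "x4 \<notin> A" "x1 \<in> B" "x3 \<in> B" "x2 \<notin> B" "x4 \<notin> B"
    using F(2-4) x4_new by auto
  then have "nonperipheral_cut E {A, ?S - A}" "nonperipheral_cut E {B, ?S - B}"
    using nonperipheral_cut_clopen[OF A(1,2), of x1 x2 x3 x4]
      nonperipheral_cut_clopen[OF B(1,2), of x1 x3 x2 x4] in_S F(2-4) x4_new
    by simp_all
  moreover have "cuts_cross {A, ?S - A} {B, ?S - B}"
    unfolding cuts_cross_def using \<open>x1 \<in> A\<close> \<open>x1 \<in> B\<close> \<open>x2 \<in> A\<close> \<open>x2 \<notin> B\<close>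
      \<open>x3 \<notin> A\<close> \<open>x3 \<in> B\<close> \<open>x4 \<notin> A\<close> \<open>x4 \<notin> B\<close> in_S
    by blast
  ultimately show thesis using that unfolding cut_vertices_def by blast
qed

lemma cut_graph_diameter_ge_two:
  assumes "stone_space E" "infinite (topspace E)"
  shows "2 \<le> cut_graph_diameter E"
proof -
  obtain c d where "c \<in> cut_vertices E" "d \<in> cut_vertices E" "cuts_cross c d"
    using crossing_nonperipheral_cuts_exist[OF assms] by blast
  then have "2 \<le> cut_dist E c d" by (simp add: cut_dist_crossing_ge_two)
  also have "\<dots> \<le> cut_graph_diameter E"
    unfolding cut_graph_diameter_def
    by (rule SUP_upper2[OF \<open>c \<in> _\<close>], rule SUP_upper2[OF \<open>d \<in> _\<close>]) simp
  finally show ?thesis .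
qed

theorem mainTheorem2:
  fixes E :: "'a topology"
  assumes "stone_space E"
    and "infinite (topspace E) \<or> card (topspace E) \<ge> 5"
  shows "cut_graph_connected E \<and>
         (finite (topspace E) \<longrightarrow> cut_graph_diameter E \<le> 4) \<and>
         (infinite (topspace E) \<longrightarrow> cut_graph_diameter E = 2)"
proof -
  have "cut_graph_connected E"
    unfolding cut_graph_connected_def using cut_walk_length_le_two[OF _ _ assms(2)] by blast
  moreover have "cut_graph_diameter E \<le> 2"
    using cut_graph_diameter_le_two[OF assms(2)] .
  moreover have "(2 :: enat) \<le> 4" by (simp add: numeral_eq_enat)
  ultimately show ?thesis
    using cut_graph_diameter_ge_two[OF assms(1)] by (auto intro: antisym order_trans)
qed

end
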